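(* Let $S : \mathbf{FinGraph}^s_\star \to \mathbf{FinArb}^<_\star$ be the least-shortest-path-tree functor and $I : \mathbf{FinArb}^<_\star \to \mathbf{FinGraph}^s_\star$ the inclusion functor (both defined below). Then $I$ is left adjoint to $S$, i.e. $I \dashv S$.
   Context: A (directed) graph is a pair $(V,\to)$ with $\to\subseteq V\times V$; $N(u)$ denotes the set of outgoing edges of $u$. A pointed graph has a distinguished vertex $v_0$; it is connected if every vertex is reachable by a path from $v_0$. A path is a finite sequence $v_1\to\cdots\to v_n$ of vertices joined by edges, of length $|\pi|$; co-initial paths share their source; $\pi\sqsubset\sigma$ means $\pi$ is a proper prefix of $\sigma$. A finite edge-ordered graph is a finite graph with a strict linear order $\triangleleft$ on each neighborhood. Lexicographic path order on co-initial paths: if $\pi\sqsubset\sigma$ then $\pi\prec\sigma$ (symmetrically if $\sigma\sqsubset\pi$); otherwise, with $\zeta$ the longest common prefix, $u$ its target and $v_1,v_2$ the next vertices in $\pi,\sigma$, $\pi\prec\sigma$ iff $u\to v_1\triangleleft u\to v_2$. Shortlex order: $\pi\prec^s\sigma$ iff $|\pi|<|\sigma|$, or $|\pi|=|\sigma|$ and $\pi\prec\sigma$. $\min^s(u\rightsquigarrow v)$ is the lexicographically least shortest path from $u$ to $v$ (the $\prec^s$-least path). For a vertex map $h$, $h(v_1\to\cdots\to v_n)=h(v_1)\to\cdots\to h(v_n)$. A homomorphism of finite pointed edge-ordered graphs $h:G\to H$ is a vertex map with (i) $u\to v$ implies $h(u)\to h(v)$; (ii) the distinguished vertex of $G$ is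 the unique vertex mapped to the distinguished vertex of $H$; (iii) $u\to v_1\triangleleft u\to v_2$ implies $h(u)\to h(v_1)\triangleleft h(u)\to h(v_2)$. A short-lex homomorphism additionally satisfies $h(\min^s(u\rightsquigarrow v))=\min^s(h(u)\rightsquigarrow h(v))$. An arborescence is a pointed graph in which for every vertex $u$ there is a unique path $v_0\rightsquigarrow u$. $\mathbf{FinGraph}^s_\star$ is the category of connected, finite, pointed, edge-ordered graphs with short-lex homomorphisms; $\mathbf{FinArb}^<_\star$ is the category of finite edge-ordered arborescences with homomorphisms of pointed edge-ordered graphs (these are automatically short-lex homomorphisms, so the inclusion $I$, identity on objects and morphisms, is a functor). The functor $S$: $S(G)$ has the vertices and distinguished vertex of $G$, contains an edge $u\to v$ iff $u\to v$ is an edge of $\min^s(v_0\rightsquigarrow v)$ in $G$, and orders co-initial edges as in $G$; $S(h)(v)=h(v)$. *)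

theory Defs
  imports Main
begin

text \<open>A finite pointed edge-ordered graph. Edges form a relation on vertices.
  eord G u v1 v2 means: the edge u->v1 is strictly below the edge u->v2 in the
  order on the neighbourhood N(u).\<close>

record 'v eograph =
  verts :: "'v set"
  edges :: "('v \<times> 'v) set"
  root  :: 'v
  eord  :: "'v \<Rightarrow> 'v \<Rightarrow> 'v \<Rightarrow> bool"

definition nbhd :: "('v, 'm) eograph_scheme \<Rightarrow> 'v \<Rightarrow> 'v set" where
  "nbhd G u = {v. (u, v) \<in> edges G}"

definition wf_eograph :: "('v, 'm) eograph_scheme \<Rightarrow> bool" where
  "wf_eograph G \<longleftrightarrow>
     finite (verts G) \<and> edges G \<subseteq> verts G \<times> verts G \<and> root G \<in> verts G \<and>
     (\<forall>u v1 v2. eord G u v1 v2 \<longrightarrow> u \<in> verts G \<and> v1 \<in> nbhd G u \<and> v2 \<in> nbhd G u) \<and>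
     (\<forall>u \<in> verts G.
        (\<forall>v. \<not> eord G u v v) \<and>
        (\<forall>a b c. eord G u a b \<longrightarrow> eord G u b c \<longrightarrow> eord G u a c) \<and>
        (\<forall>a \<in> nbhd G u. \<forall>b \<in> nbhd G u. a \<noteq> b \<longrightarrow> eord G u a b \<or> eord G u b a))"

definition is_path :: "('v, 'm) eograph_scheme \<Rightarrow> 'v list \<Rightarrow> bool" where
  "is_path G xs \<longleftrightarrow> xs \<noteq> [] \<and> set xs \<subseteq> verts G \<and>
     (\<forall>i. Suc i < length xs \<longrightarrow> (xs ! i, xs ! Suc i) \<in> edges G)"

definition path_from_to :: "('v, 'm) eograph_scheme \<Rightarrow> 'v \<Rightarrow> 'v \<Rightarrow> 'v list \<Rightarrow> bool" where
  "path_from_to G u v xs \<longleftrightarrow> is_path G xs \<and> hd xs = u \<and> last xs = v"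

definition reachable :: "('v, 'm) eograph_scheme \<Rightarrow> 'v \<Rightarrow> 'v \<Rightarrow> bool" where
  "reachable G u v \<longleftrightarrow> (\<exists>xs. path_from_to G u v xs)"

definition connected_graph :: "('v, 'm) eograph_scheme \<Rightarrow> bool" where
  "connected_graph G \<longleftrightarrow> (\<forall>v \<in> verts G. reachable G (root G) v)"

definition lex_less :: "('v, 'm) eograph_scheme \<Rightarrow> 'v list \<Rightarrow> 'v list \<Rightarrow> bool" where
  "lex_less G p q \<longleftrightarrow>
     (\<exists>r. r \<noteq> [] \<and> q = p @ r) \<or>
     (\<exists>z a b r1 r2. z \<noteq> [] \<and> a \<noteq> b \<and> p = z @ a # r1 \<and> q = z @ b # r2 \<and> eord G (last z) a b)"

definition shortlex_less :: "('v, 'm) eograph_scheme \<Rightarrow> 'v list \<Rightarrow> 'v list \<Rightarrow> bool" where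
  "shortlex_less G p q \<longleftrightarrow>
     length p < length q \<or> (length p = length q \<and> lex_less G p q)"

definition min_s :: "('v, 'm) eograph_scheme \<Rightarrow> 'v \<Rightarrow> 'v \<Rightarrow> 'v list" where
  "min_s G u v = (THE p. path_from_to G u v p \<and>
       (\<forall>q. path_from_to G u v q \<longrightarrow> q \<noteq> p \<longrightarrow> shortlex_less G p q))"

definition graph_hom :: "('v, 'm) eograph_scheme \<Rightarrow> ('w, 'n) eograph_scheme \<Rightarrow> ('v \<Rightarrow> 'w) \<Rightarrow> bool" where
  "graph_hom G H h \<longleftrightarrow>
     (\<forall>u \<in> verts G. h u \<in> verts H) \<and>
     (\<forall>u v. (u, v) \<in> edges G \<longrightarrow> (h u, h v) \<in> edges H) \<and>
     (\<forall>u \<in> verts G. h u = root H \<longleftrightarrow> u = root G) \<and>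
     (\<forall>u v1 v2. eord G u v1 v2 \<longrightarrow> eord H (h u) (h v1) (h v2))"

definition shortlex_hom :: "('v, 'm) eograph_scheme \<Rightarrow> ('w, 'n) eograph_scheme \<Rightarrow> ('v \<Rightarrow> 'w) \<Rightarrow> bool" where
  "shortlex_hom G H h \<longleftrightarrow> graph_hom G H h \<and>
     (\<forall>u \<in> verts G. \<forall>v \<in> verts G. reachable G u v \<longrightarrow>
        map h (min_s G u v) = min_s H (h u) (h v))"

definition arborescence :: "('v, 'm) eograph_scheme \<Rightarrow> bool" where
  "arborescence G \<longleftrightarrow> (\<forall>u \<in> verts G. \<exists>!xs. path_from_to G (root G) u xs)"

definition fingraph_obj :: "('v, 'm) eograph_scheme \<Rightarrow> bool" where
  "fingraph_obj G \<longleftrightarrow> wf_eograph G \<and> connected_graph G"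

definition finarb_obj :: "('v, 'm) eograph_scheme \<Rightarrow> bool" where
  "finarb_obj G \<longleftrightarrow> wf_eograph G \<and> arborescence G"

text \<open>The least-shortest-path-tree functor S on objects (on morphisms S(h) = h).\<close>

definition S_edges :: "('v, 'm) eograph_scheme \<Rightarrow> ('v \<times> 'v) set" where
  "S_edges G = {(u, v). v \<in> verts G \<and>
     (\<exists>i. Suc i < length (min_s G (root G) v) \<and>
          min_s G (root G) v ! i = u \<and> min_s G (root G) v ! Suc i = v)}"

definition S_obj :: "('v, 'm) eograph_scheme \<Rightarrow> 'v eograph" where
  "S_obj G = \<lparr> verts = verts G, edges = S_edges G, root = root G,
     eord = (\<lambda>u a b. eord G u a b \<and> (u, a) \<in> S_edges G \<and> (u, b) \<in> S_edges G) \<rparr>"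

end

theory Submission imports Defs begin

text \<open>Among co-initial paths the shortlex order is a strict total order which is compatible
  with appending a common tail and with replacing a common initial segment; hence every prefix
  and every suffix of a least path is again least. Consequently the least paths from the root
  of G fit together into a tree S(G): u \<rightarrow> v is an edge of S(G) iff the least path to v is
  the least path to u followed by v, and the paths from the root in S(G) are exactly the least
  paths of G. A short-lex homomorphism preserves this description of the edges, which makes S a
  functor. Finally, if A is an arborescence, every path of A from the root is least, so a
  homomorphism A \<rightarrow> G is short-lex iff it maps the edges of A into S(G): the image of the
  path root \<leadsto> u \<leadsto> v is then a path of S(G), i.e. a least path, and so is its part from h u
  to h v.\<close>

section \<open>Paths\<close>

lemma is_path_simps [simp]:
  "\<not> is_path G []"
  "is_path G [x] \<longleftrightarrow> x \<in> verts G"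
  "is_path G (x # y # xs) \<longleftrightarrow> x \<in> verts G \<and> (x, y) \<in> edges G \<and> is_path G (y # xs)"
  unfolding is_path_def by (auto simp: less_Suc_eq_0_disj)

lemma is_path_append:
  "xs \<noteq> [] \<Longrightarrow> ys \<noteq> [] \<Longrightarrow>
   is_path G (xs @ ys) \<longleftrightarrow> is_path G xs \<and> is_path G ys \<and> (last xs, hd ys) \<in> edges G"
  by (induction xs rule: induct_list012) (auto simp: neq_Nil_conv)

lemma is_path_appendD:
  "is_path G (xs @ ys) \<Longrightarrow> xs \<noteq> [] \<Longrightarrow> is_path G xs"
  "is_path G (xs @ ys) \<Longrightarrow> ys \<noteq> [] \<Longrightarrow> is_path G ys"
  by (cases "ys = []"; simp add: is_path_append) (cases "xs = []"; simp add: is_path_append)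

lemma is_path_map: "graph_hom G H h \<Longrightarrow> is_path G p \<Longrightarrow> is_path H (map h p)"
  by (induction p rule: induct_list012) (auto simp: graph_hom_def)

lemma path_from_to_not_Nil: "path_from_to G u v p \<Longrightarrow> p \<noteq> []"
  by (auto simp: path_from_to_def)

lemma path_from_to_join:
  assumes p: "path_from_to G u v p" and q: "path_from_to G v w q"
  shows "path_from_to G u w (p @ tl q)"
proof -
  obtain ys where q_eq: "q = v # ys" using q by (cases q) (auto simp: path_from_to_def)
  show ?thesis
  proof (cases ys)
    case Nil
    then show ?thesis using p q q_eq by (simp add: path_from_to_def)
  next
    case (Cons y ys')
    then show ?thesis using p q q_eq path_from_to_not_Nil[OF p] is_path_append[of p ys G]
      by (auto simp: path_from_to_def)
  qed
qed

lemma path_from_to_split: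
  assumes p: "path_from_to G u v p" and k: "k < length p"
  shows "path_from_to G u (p ! k) (take (Suc k) p)" "path_from_to G (p ! k) v (drop k p)"
    "p = take (Suc k) p @ tl (drop k p)"
proof -
  show "p = take (Suc k) p @ tl (drop k p)" by (metis append_take_drop_id drop_Suc tl_drop)
  have "is_path G (take (Suc k) p)"
    using is_path_appendD(1)[of G "take (Suc k) p" "drop (Suc k) p"] p path_from_to_not_Nil[OF p]
    by (simp add: path_from_to_def)
  moreover have "is_path G (drop k p)"
    using is_path_appendD(2)[of G "take k p" "drop k p"] p k by (simp add: path_from_to_def)
  moreover have "last (take (Suc k) p) = p ! k" using k by (simp add: take_Suc_conv_app_nth)
  ultimately show "path_from_to G u (p ! k) (take (Suc k) p)" "path_from_to G (p ! k) v (drop k p)"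
    using p k by (auto simp: path_from_to_def hd_drop_conv_nth)
qed

lemma path_from_to_map:
  assumes "graph_hom G H h" and p: "path_from_to G u v p"
  shows "path_from_to H (h u) (h v) (map h p)"
  using is_path_map[OF assms(1)] p path_from_to_not_Nil[OF p]
  by (simp add: path_from_to_def hd_map last_map)

lemma graph_hom_root: "wf_eograph G \<Longrightarrow> graph_hom G H h \<Longrightarrow> h (root G) = root H"
  by (simp add: wf_eograph_def graph_hom_def)

section \<open>The shortlex order\<close>

lemma wf_eograph_eord_irrefl: "wf_eograph G \<Longrightarrow> \<not> eord G u a a"
  unfolding wf_eograph_def by blast

lemma wf_eograph_eord_trans: "wf_eograph G \<Longrightarrow> eord G u a b \<Longrightarrow> eord G u b c \<Longrightarrow> eord G u a c"
  unfolding wf_eograph_def by blast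

lemma wf_eograph_eord_total:
  "wf_eograph G \<Longrightarrow> (u, a) \<in> edges G \<Longrightarrow> (u, b) \<in> edges G \<Longrightarrow> a \<noteq> b
   \<Longrightarrow> eord G u a b \<or> eord G u b a"
  unfolding wf_eograph_def nbhd_def by blast

lemma wf_eograph_eord_edges:
  "wf_eograph G \<Longrightarrow> eord G u a b \<Longrightarrow> (u, a) \<in> edges G \<and> (u, b) \<in> edges G"
  unfolding wf_eograph_def nbhd_def by blast

definition branch_less :: "('v, 'm) eograph_scheme \<Rightarrow> 'v list \<Rightarrow> 'v list \<Rightarrow> bool" where
  "branch_less G p q \<longleftrightarrow>
     (\<exists>z a b r1 r2. z \<noteq> [] \<and> a \<noteq> b \<and> p = z @ a # r1 \<and> q = z @ b # r2 \<and> eord G (last z) a b)"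

lemma shortlex_less_iff:
  "shortlex_less G p q \<longleftrightarrow> length p < length q \<or> length p = length q \<and> branch_less G p q"
proof -
  have "\<not> (\<exists>r. r \<noteq> [] \<and> q = p @ r)" if "length p = length q" using that by auto
  then show ?thesis unfolding shortlex_less_def lex_less_def branch_less_def by auto
qed

lemma append_Cons_eq_append_Cons_cases:
  assumes "z @ a # r = z' @ a' # r'"
  obtains "z = z'" "a = a'" "r = r'" | w where "z' = z @ a # w" | w where "z = z' @ a' # w"
proof -
  obtain us where "z = z' @ us \<and> us @ a # r = a' # r' \<or> z @ us = z' \<and> a # r = us @ a' # r'"
    using assms by (auto simp: append_eq_append_conv2)
  then show thesis
  proof (elim disjE conjE)
    assume "z = z' @ us" "us @ a # r = a' # r'"
    then show thesis using that(1,3) by (cases us) auto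
  next
    assume "z @ us = z'" "a # r = us @ a' # r'"
    then show thesis using that(1,2) by (cases us) auto
  qed
qed

lemma branch_lessI:
  "z \<noteq> [] \<Longrightarrow> a \<noteq> b \<Longrightarrow> eord G (last z) a b \<Longrightarrow> branch_less G (z @ a # r1) (z @ b # r2)"
  unfolding branch_less_def by blast

lemma branch_lessE:
  assumes "branch_less G p q"
  obtains z a b r1 r2 where "p = z @ a # r1" "q = z @ b # r2" "z \<noteq> []" "a \<noteq> b" "eord G (last z) a b"
  using assms unfolding branch_less_def by blast

lemma branch_less_irrefl: "\<not> branch_less G p p"
  by (auto elim: branch_lessE)

lemma branch_less_trans:
  assumes wf: "wf_eograph G" and pq: "branch_less G p q" and qr: "branch_less G q r"
  shows "branch_less G p r"
proof -
  obtain z a b r1 r2 where p: "p = z @ a # r1" and q: "q = z @ b # r2"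
    and z: "z \<noteq> []" "a \<noteq> b" "eord G (last z) a b"
    using pq by (rule branch_lessE)
  obtain z' b' c r2' r3 where q': "q = z' @ b' # r2'" and r: "r = z' @ c # r3"
    and z': "z' \<noteq> []" "b' \<noteq> c" "eord G (last z') b' c"
    using qr by (rule branch_lessE)
  have "z @ b # r2 = z' @ b' # r2'" using q q' by simp
  then show ?thesis
  proof (cases rule: append_Cons_eq_append_Cons_cases)
    case 1
    then have "eord G (last z) a c" using z(3) z'(3) wf_eograph_eord_trans[OF wf] by simp
    moreover from this have "a \<noteq> c" using wf_eograph_eord_irrefl[OF wf] by metis
    ultimately show ?thesis unfolding p r using branch_lessI z(1) \<open>z = z'\<close> by metis
  next
    case (2 w)
    then have "r = z @ b # (w @ c # r3)" using r by simp
    then show ?thesis unfolding p using branch_lessI z by metis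
  next
    case (3 w)
    then have "p = z' @ b' # (w @ a # r1)" using p by simp
    then show ?thesis unfolding r using branch_lessI z' by metis
  qed
qed

lemma branch_less_asym:
  assumes wf: "wf_eograph G" and pq: "branch_less G p q"
  shows "\<not> branch_less G q p"
proof
  assume qp: "branch_less G q p"
  obtain z a b r1 r2 where p: "p = z @ a # r1" and q: "q = z @ b # r2"
    and z: "a \<noteq> b" "eord G (last z) a b"
    using pq by (rule branch_lessE)
  obtain z' c d s1 s2 where q': "q = z' @ c # s1" and p': "p = z' @ d # s2"
    and z': "c \<noteq> d" "eord G (last z') c d"
    using qp by (rule branch_lessE)
  have "z @ a # r1 = z' @ d # s2" using p p' by simp
  then show False
  proof (cases rule: append_Cons_eq_append_Cons_cases)
    case 1
    then have "b = c" "a = d" using q q' by simp_all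
    then have "eord G (last z) b a" using 1 z'(2) by simp
    with z(2) have "eord G (last z) a a" by (rule wf_eograph_eord_trans[OF wf])
    then show False using wf_eograph_eord_irrefl[OF wf] by metis
  next
    case (2 w)
    then have "z @ b # r2 = z @ a # (w @ c # s1)" using q q' by simp
    then show False using z(1) by simp
  next
    case (3 w)
    then have "z' @ c # s1 = z' @ d # (w @ b # r2)" using q q' by simp
    then show False using z'(1) by simp
  qed
qed

lemma branch_less_total:
  assumes wf: "wf_eograph G" and paths: "is_path G p" "is_path G q"
    and same: "length p = length q" "hd p = hd q" "p \<noteq> q"
  shows "branch_less G p q \<or> branch_less G q p"
proof -
  obtain z p' q' where split: "p = z @ p'" "q = z @ q'" "p' = [] \<or> q' = [] \<or> hd p' \<noteq> hd q'"
    using longest_common_prefix by blast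
  have "length p' = length q'" using split same(1) by simp
  then have "p' \<noteq> [] \<and> q' \<noteq> []" using split(1,2) same(3) by auto
  then obtain a b r1 r2 where ab: "p' = a # r1" "q' = b # r2"
    by (auto simp: neq_Nil_conv)
  have "a \<noteq> b" using split(3) ab by simp
  have "z \<noteq> []"
  proof
    assume "z = []"
    then show False using split(1,2) ab same(2) \<open>a \<noteq> b\<close> by simp
  qed
  have "is_path G (z @ a # r1)" "is_path G (z @ b # r2)" using paths split ab by simp_all
  then have "(last z, a) \<in> edges G" "(last z, b) \<in> edges G"
    using \<open>z \<noteq> []\<close> is_path_append[of z "a # r1" G] is_path_append[of z "b # r2" G] by auto
  then show ?thesis
    using wf_eograph_eord_total[OF wf] branch_lessI[of z] split ab \<open>z \<noteq> []\<close> \<open>a \<noteq> b\<close> by metis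
qed

lemma branch_less_append:
  assumes "branch_less G p q"
  shows "branch_less G (p @ s) (q @ t)"
proof -
  obtain z a b r1 r2 where "z \<noteq> []" "a \<noteq> b" "p = z @ a # r1" "q = z @ b # r2" "eord G (last z) a b"
    using assms unfolding branch_less_def by blast
  then have "z \<noteq> [] \<and> a \<noteq> b \<and> p @ s = z @ a # (r1 @ s) \<and> q @ t = z @ b # (r2 @ t) \<and>
      eord G (last z) a b"
    by simp
  then show ?thesis unfolding branch_less_def by blast
qed

lemma branch_less_join_left:
  assumes pq: "branch_less G p q" and P: "P \<noteq> []" "last P = hd p"
  shows "branch_less G (P @ tl p) (P @ tl q)"
proof -
  obtain z a b r1 r2 where split: "p = z @ a # r1" "q = z @ b # r2"
    and z: "z \<noteq> []" "a \<noteq> b" "eord G (last z) a b"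
    using pq unfolding branch_less_def by blast
  have "P @ tl p = (P @ tl z) @ a # r1" "P @ tl q = (P @ tl z) @ b # r2"
    using split z by (cases z; simp)+
  moreover have "last (P @ tl z) = last z"
    using P split z by (cases z) (auto simp: last_append)
  ultimately show ?thesis using P z unfolding branch_less_def by (metis append_is_Nil_conv)
qed

lemma shortlex_less_irrefl: "\<not> shortlex_less G p p"
  by (simp add: shortlex_less_iff branch_less_irrefl)

lemma shortlex_less_trans:
  "wf_eograph G \<Longrightarrow> shortlex_less G p q \<Longrightarrow> shortlex_less G q r \<Longrightarrow> shortlex_less G p r"
  using branch_less_trans[of G p q r] by (auto simp: shortlex_less_iff)

lemma shortlex_less_asym: "wf_eograph G \<Longrightarrow> shortlex_less G p q \<Longrightarrow> \<not> shortlex_less G q p"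
  using branch_less_asym[of G p q] by (auto simp: shortlex_less_iff)

lemma shortlex_less_total:
  "wf_eograph G \<Longrightarrow> is_path G p \<Longrightarrow> is_path G q \<Longrightarrow> hd p = hd q \<Longrightarrow> p \<noteq> q \<Longrightarrow>
   shortlex_less G p q \<or> shortlex_less G q p"
  using branch_less_total[of G p q] unfolding shortlex_less_iff
  by (cases "length p < length q"; cases "length q < length p") auto

lemma shortlex_less_append: "shortlex_less G p q \<Longrightarrow> shortlex_less G (p @ s) (q @ s)"
  using branch_less_append[of G p q s s] by (auto simp: shortlex_less_iff)

lemma shortlex_less_join_left:
  assumes pq: "shortlex_less G p q" and ne: "p \<noteq> []" "q \<noteq> []" and P: "P \<noteq> []" "last P = hd p"
  shows "shortlex_less G (P @ tl p) (P @ tl q)"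
proof -
  have "length (tl p) < length (tl q) \<or> length (tl p) = length (tl q) \<and> branch_less G p q"
    using pq ne unfolding shortlex_less_iff by (auto simp flip: length_greater_0_conv)
  then show ?thesis using branch_less_join_left[OF _ P] unfolding shortlex_less_iff by auto
qed

section \<open>Least paths\<close>

definition least_path :: "('v, 'm) eograph_scheme \<Rightarrow> 'v \<Rightarrow> 'v \<Rightarrow> 'v list \<Rightarrow> bool" where
  "least_path G u v p \<longleftrightarrow>
     path_from_to G u v p \<and> (\<forall>q. path_from_to G u v q \<longrightarrow> \<not> shortlex_less G q p)"

lemma least_path_exists:
  assumes wf: "wf_eograph G" and uv: "reachable G u v"
  obtains p where "least_path G u v p"
proof -
  obtain p0 where p0: "path_from_to G u v p0" using uv unfolding reachable_def by blast
  define F where "F = {p. path_from_to G u v p \<and> length p \<le> length p0}"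
  have "F \<subseteq> {xs. set xs \<subseteq> verts G \<and> length xs \<le> length p0}"
    unfolding F_def path_from_to_def is_path_def by blast
  moreover have "finite (verts G)" using wf unfolding wf_eograph_def by blast
  ultimately have "finite F" using finite_lists_length_le finite_subset by blast
  moreover have "asymp_on F (shortlex_less G)" "transp_on F (shortlex_less G)"
    using shortlex_less_asym[OF wf] shortlex_less_trans[OF wf]
    unfolding asymp_on_def transp_on_def by blast+
  moreover have "F \<noteq> {}" using p0 unfolding F_def by blast
  ultimately obtain m where m: "m \<in> F" "\<forall>q \<in> F. q \<noteq> m \<longrightarrow> \<not> shortlex_less G q m"
    using Finite_Set.bex_min_element by metis
  have "\<not> shortlex_less G q m" if q: "path_from_to G u v q" for q
  proof (cases "q \<in> F")
    case True
    then show ?thesis using m shortlex_less_irrefl by metis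
  next
    case False
    then have "length m < length q" using q m(1) unfolding F_def by auto
    then show ?thesis unfolding shortlex_less_iff by auto
  qed
  then show thesis using m(1) that unfolding F_def least_path_def by blast
qed

lemma least_path_shortlex_less:
  assumes wf: "wf_eograph G" and p: "least_path G u v p" and q: "path_from_to G u v q" "q \<noteq> p"
  shows "shortlex_less G p q"
  using shortlex_less_total[OF wf, of p q] p q unfolding least_path_def path_from_to_def by metis

lemma min_s_eqI:
  assumes wf: "wf_eograph G" and p: "least_path G u v p"
  shows "min_s G u v = p"
  unfolding min_s_def
proof (rule the_equality)
  show "path_from_to G u v p \<and> (\<forall>q. path_from_to G u v q \<longrightarrow> q \<noteq> p \<longrightarrow> shortlex_less G p q)"
    using p least_path_shortlex_less[OF wf p] unfolding least_path_def by blast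
next
  fix p' assume "path_from_to G u v p' \<and> (\<forall>q. path_from_to G u v q \<longrightarrow> q \<noteq> p' \<longrightarrow> shortlex_less G p' q)"
  then show "p' = p" using p unfolding least_path_def by blast
qed

lemma least_path_min_s: "wf_eograph G \<Longrightarrow> reachable G u v \<Longrightarrow> least_path G u v (min_s G u v)"
  using least_path_exists min_s_eqI by metis

lemma least_path_prefix:
  assumes pq: "least_path G u w (p @ tl q)"
    and p: "path_from_to G u v p" and q: "path_from_to G v w q"
  shows "least_path G u v p"
  unfolding least_path_def
proof (intro conjI allI impI notI p)
  fix r assume r: "path_from_to G u v r" and rp: "shortlex_less G r p"
  from rp have "shortlex_less G (r @ tl q) (p @ tl q)" by (rule shortlex_less_append)
  moreover have "path_from_to G u w (r @ tl q)" using r q by (rule path_from_to_join)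
  ultimately show False using pq unfolding least_path_def by blast
qed

lemma least_path_suffix:
  assumes pq: "least_path G u w (p @ tl q)"
    and p: "path_from_to G u v p" and q: "path_from_to G v w q"
  shows "least_path G v w q"
  unfolding least_path_def
proof (intro conjI allI impI notI q)
  fix r assume r: "path_from_to G v w r" and rq: "shortlex_less G r q"
  have "last p = hd r" using p r by (simp add: path_from_to_def)
  with rq have "shortlex_less G (p @ tl r) (p @ tl q)"
    using shortlex_less_join_left path_from_to_not_Nil[OF p] path_from_to_not_Nil[OF q]
      path_from_to_not_Nil[OF r] by blast
  moreover have "path_from_to G u w (p @ tl r)" using p r by (rule path_from_to_join)
  ultimately show False using pq unfolding least_path_def by blast
qed

lemma min_s_take:
  assumes wf: "wf_eograph G" and p: "least_path G u v p" and k: "k < length p"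
  shows "min_s G u (p ! k) = take (Suc k) p"
proof -
  have "path_from_to G u v p" using p unfolding least_path_def by blast
  with k have "least_path G u (p ! k) (take (Suc k) p)"
    using least_path_prefix p path_from_to_split by metis
  then show ?thesis by (rule min_s_eqI[OF wf])
qed

lemma min_s_self:
  assumes wf: "wf_eograph G" and v: "v \<in> verts G"
  shows "min_s G v v = [v]"
proof (rule min_s_eqI[OF wf])
  have "\<not> shortlex_less G q [v]" if "path_from_to G v v q" for q
    using that by (cases q) (auto simp: shortlex_less_iff path_from_to_def elim: branch_lessE)
  then show "least_path G v v [v]" using v by (simp add: least_path_def path_from_to_def)
qed

section \<open>The tree of least paths\<close>

lemma least_path_root_min_s:
  "fingraph_obj G \<Longrightarrow> v \<in> verts G \<Longrightarrow> least_path G (root G) v (min_s G (root G) v)"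
  using least_path_min_s[of G "root G" v] by (simp add: fingraph_obj_def connected_graph_def)

lemma fingraph_obj_if_finarb_obj: "finarb_obj A \<Longrightarrow> fingraph_obj A"
  unfolding finarb_obj_def fingraph_obj_def arborescence_def connected_graph_def reachable_def
  by (meson ex1_implies_ex)

lemma shortlex_hom_min_s_root:
  assumes G: "fingraph_obj G" and h: "shortlex_hom G H h" and v: "v \<in> verts G"
  shows "map h (min_s G (root G) v) = min_s H (root H) (h v)"
proof -
  have wf: "wf_eograph G" using G by (simp add: fingraph_obj_def)
  then have "root G \<in> verts G" by (simp add: wf_eograph_def)
  moreover have "reachable G (root G) v"
    using G v by (simp add: fingraph_obj_def connected_graph_def)
  moreover have "h (root G) = root H"
    using h graph_hom_root[OF wf] unfolding shortlex_hom_def by blast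
  ultimately show ?thesis using h v unfolding shortlex_hom_def by metis
qed

lemma S_obj_simps [simp]:
  "verts (S_obj G) = verts G" "edges (S_obj G) = S_edges G" "root (S_obj G) = root G"
  "eord (S_obj G) u a b \<longleftrightarrow> eord G u a b \<and> (u, a) \<in> S_edges G \<and> (u, b) \<in> S_edges G"
  unfolding S_obj_def by simp_all

lemma S_edges_iff:
  assumes G: "fingraph_obj G"
  shows "(u, v) \<in> S_edges G \<longleftrightarrow>
    u \<in> verts G \<and> v \<in> verts G \<and> min_s G (root G) v = min_s G (root G) u @ [v]"
proof
  have wf: "wf_eograph G" using G unfolding fingraph_obj_def by blast
  assume "(u, v) \<in> S_edges G"
  then obtain i where v: "v \<in> verts G" and i: "Suc i < length (min_s G (root G) v)"
    "min_s G (root G) v ! i = u" "min_s G (root G) v ! Suc i = v"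
    by (auto simp: S_edges_def)
  define m where "m = min_s G (root G) v"
  have m: "least_path G (root G) v m" unfolding m_def using least_path_root_min_s[OF G v] .
  have "m = take (Suc (Suc i)) m" using min_s_take[OF wf m, of "Suc i"] i by (simp add: m_def)
  also have "\<dots> = take (Suc i) m @ [v]" using i by (simp add: m_def take_Suc_conv_app_nth)
  also have "take (Suc i) m = min_s G (root G) u"
    using min_s_take[OF wf m, of i] i by (simp add: m_def)
  finally have "min_s G (root G) v = min_s G (root G) u @ [v]" by (simp add: m_def)
  moreover have "u \<in> set m" using i by (metis Suc_lessD m_def nth_mem)
  then have "u \<in> verts G" using m by (auto simp: least_path_def path_from_to_def is_path_def)
  ultimately show "u \<in> verts G \<and> v \<in> verts G \<and> min_s G (root G) v = min_s G (root G) u @ [v]"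
    using v by blast
next
  assume uv: "u \<in> verts G \<and> v \<in> verts G \<and> min_s G (root G) v = min_s G (root G) u @ [v]"
  define P where "P = min_s G (root G) u"
  have "path_from_to G (root G) u P"
    using least_path_root_min_s[OF G] uv unfolding P_def least_path_def by blast
  then have "P \<noteq> []" "last P = u" by (auto simp: path_from_to_def)
  then have "Suc (length P - 1) < length (P @ [v]) \<and> (P @ [v]) ! (length P - 1) = u \<and>
      (P @ [v]) ! Suc (length P - 1) = v"
    by (simp add: nth_append last_conv_nth)
  moreover have "min_s G (root G) v = P @ [v]" using uv P_def by simp
  ultimately show "(u, v) \<in> S_edges G" using uv unfolding S_edges_def by auto
qed

lemma S_edges_subset_edges:
  assumes G: "fingraph_obj G"
  shows "S_edges G \<subseteq> edges G"
proof
  fix e assume "e \<in> S_edges G"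
  then obtain u v where e: "e = (u, v)" and uv: "u \<in> verts G" "v \<in> verts G"
    and eq: "min_s G (root G) v = min_s G (root G) u @ [v]"
    using S_edges_iff[OF G] by (metis surj_pair)
  define P where "P = min_s G (root G) u"
  have P: "path_from_to G (root G) u P" and Pv: "path_from_to G (root G) v (P @ [v])"
    using least_path_root_min_s[OF G] uv eq unfolding least_path_def P_def by metis+
  have "(last P, v) \<in> edges G"
    using Pv is_path_append[of P "[v]" G] path_from_to_not_Nil[OF P] by (simp add: path_from_to_def)
  then show "e \<in> edges G" using e P by (simp add: path_from_to_def)
qed

lemma wf_eograph_S_obj:
  assumes G: "fingraph_obj G"
  shows "wf_eograph (S_obj G)"
proof -
  have "wf_eograph G" using G unfolding fingraph_obj_def by blast
  moreover have "S_edges G \<subseteq> edges G" using S_edges_subset_edges[OF G] .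
  ultimately show ?thesis unfolding wf_eograph_def nbhd_def S_obj_simps by (intro conjI) blast+
qed

lemma is_path_S_obj_min_s:
  assumes G: "fingraph_obj G" and v: "v \<in> verts G"
  shows "is_path (S_obj G) (min_s G (root G) v)"
proof -
  have wf: "wf_eograph G" using G unfolding fingraph_obj_def by blast
  define m where "m = min_s G (root G) v"
  have m: "least_path G (root G) v m" unfolding m_def using least_path_root_min_s[OF G v] .
  then have path: "is_path G m" unfolding least_path_def path_from_to_def by blast
  have "(m ! i, m ! Suc i) \<in> S_edges G" if i: "Suc i < length m" for i
  proof -
    have "m ! i \<in> verts G" "m ! Suc i \<in> verts G"
      using path i unfolding is_path_def by (meson Suc_lessD nth_mem subsetD)+
    moreover have "min_s G (root G) (m ! Suc i) = min_s G (root G) (m ! i) @ [m ! Suc i]"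
      using min_s_take[OF wf m] i by (simp add: take_Suc_conv_app_nth)
    ultimately show ?thesis using S_edges_iff[OF G] by blast
  qed
  then show ?thesis using path unfolding m_def is_path_def by simp
qed

lemma S_obj_path_eq_min_s:
  assumes G: "fingraph_obj G"
  shows "is_path (S_obj G) p \<Longrightarrow> hd p = root G \<Longrightarrow> p = min_s G (root G) (last p)"
proof (induction p rule: rev_induct)
  case (snoc x xs)
  have wf: "wf_eograph G" using G unfolding fingraph_obj_def by blast
  show ?case
  proof (cases "xs = []")
    case True
    then show ?thesis using snoc.prems min_s_self[OF wf] by simp
  next
    case False
    then have "is_path (S_obj G) xs" "(last xs, x) \<in> S_edges G" "hd xs = root G"
      using snoc.prems is_path_append[of xs "[x]" "S_obj G"] by auto
    then show ?thesis using snoc.IH S_edges_iff[OF G] by simp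
  qed
qed simp

lemma finarb_obj_S_obj:
  assumes G: "fingraph_obj G"
  shows "finarb_obj (S_obj G)"
  unfolding finarb_obj_def arborescence_def
proof (intro conjI wf_eograph_S_obj[OF G] ballI ex1I)
  fix v assume "v \<in> verts (S_obj G)"
  then have v: "v \<in> verts G" by simp
  have "path_from_to G (root G) v (min_s G (root G) v)"
    using least_path_root_min_s[OF G v] unfolding least_path_def by blast
  then show "path_from_to (S_obj G) (root (S_obj G)) v (min_s G (root G) v)"
    using is_path_S_obj_min_s[OF G v] by (simp add: path_from_to_def)
  fix p assume "path_from_to (S_obj G) (root (S_obj G)) v p"
  then show "p = min_s G (root G) v"
    using S_obj_path_eq_min_s[OF G] by (auto simp: path_from_to_def)
qed

section \<open>The adjunction\<close>

lemma graph_hom_S_obj_iff: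
  assumes A: "wf_eograph A" and G: "fingraph_obj G"
  shows "graph_hom A (S_obj G) h \<longleftrightarrow>
    graph_hom A G h \<and> (\<forall>u v. (u, v) \<in> edges A \<longrightarrow> (h u, h v) \<in> S_edges G)"
  using wf_eograph_eord_edges[OF A] S_edges_subset_edges[OF G]
  unfolding graph_hom_def S_obj_simps by blast

lemma graph_hom_S_obj_source: "fingraph_obj G \<Longrightarrow> graph_hom G H h \<Longrightarrow> graph_hom (S_obj G) H h"
  using S_edges_subset_edges unfolding graph_hom_def S_obj_simps by blast

lemma shortlex_hom_S_edges:
  assumes G: "fingraph_obj G" and H: "fingraph_obj H" and h: "shortlex_hom G H h"
    and uv: "(u, v) \<in> S_edges G"
  shows "(h u, h v) \<in> S_edges H"
proof -
  have u: "u \<in> verts G" and v: "v \<in> verts G"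
    and eq: "min_s G (root G) v = min_s G (root G) u @ [v]"
    using uv S_edges_iff[OF G] by blast+
  have "min_s H (root H) (h v) = min_s H (root H) (h u) @ [h v]"
    using arg_cong[OF eq, of "map h"] shortlex_hom_min_s_root[OF G h] u v by simp
  moreover have "h u \<in> verts H" "h v \<in> verts H"
    using h u v unfolding shortlex_hom_def graph_hom_def by blast+
  ultimately show ?thesis using S_edges_iff[OF H] by blast
qed

lemma graph_hom_S_obj_S_obj:
  assumes G: "fingraph_obj G" and H: "fingraph_obj H" and h: "shortlex_hom G H h"
  shows "graph_hom (S_obj G) (S_obj H) h"
proof -
  have "graph_hom G H h" using h by (simp add: shortlex_hom_def)
  then have "graph_hom (S_obj G) H h" by (rule graph_hom_S_obj_source[OF G])
  then show ?thesis
    unfolding graph_hom_S_obj_iff[OF wf_eograph_S_obj[OF G] H]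
    using shortlex_hom_S_edges[OF G H h] by simp
qed

lemma finarb_obj_edges_subset_S_edges:
  assumes A: "finarb_obj A"
  shows "edges A \<subseteq> S_edges A"
proof safe
  fix u v assume uv: "(u, v) \<in> edges A"
  have A': "fingraph_obj A" using fingraph_obj_if_finarb_obj[OF A] .
  have u: "u \<in> verts A" and v: "v \<in> verts A"
    using A uv unfolding finarb_obj_def wf_eograph_def by blast+
  have "path_from_to A (root A) u (min_s A (root A) u)"
    using least_path_root_min_s[OF A' u] unfolding least_path_def by blast
  moreover have "path_from_to A u v [u, v]" using u v uv by (simp add: path_from_to_def)
  ultimately have "path_from_to A (root A) v (min_s A (root A) u @ [v])"
    using path_from_to_join by fastforce
  moreover have "path_from_to A (root A) v (min_s A (root A) v)"
    using least_path_root_min_s[OF A' v] unfolding least_path_def by blast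
  ultimately have "min_s A (root A) v = min_s A (root A) u @ [v]"
    using A v unfolding finarb_obj_def arborescence_def by blast
  then show "(u, v) \<in> S_edges A" using S_edges_iff[OF A'] u v by blast
qed

lemma graph_hom_S_obj_if_shortlex_hom:
  assumes A: "finarb_obj A" and G: "fingraph_obj G" and h: "shortlex_hom A G h"
  shows "graph_hom A (S_obj G) h"
proof -
  have A': "fingraph_obj A" using fingraph_obj_if_finarb_obj[OF A] .
  have "wf_eograph A" using A by (simp add: finarb_obj_def)
  then show ?thesis
    unfolding graph_hom_S_obj_iff[OF \<open>wf_eograph A\<close> G]
    using h finarb_obj_edges_subset_S_edges[OF A] shortlex_hom_S_edges[OF A' G h]
    unfolding shortlex_hom_def by blast
qed

lemma shortlex_hom_if_graph_hom_S_obj: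
  assumes A: "finarb_obj A" and G: "fingraph_obj G" and h: "graph_hom A (S_obj G) h"
  shows "shortlex_hom A G h"
proof -
  have A': "fingraph_obj A" using fingraph_obj_if_finarb_obj[OF A] .
  have wfA: "wf_eograph A" and wfG: "wf_eograph G"
    using A G by (simp_all add: finarb_obj_def fingraph_obj_def)
  have hG: "graph_hom A G h" using h graph_hom_S_obj_iff[OF wfA G] by blast
  show ?thesis unfolding shortlex_hom_def
  proof (intro conjI hG ballI impI)
    fix u v assume u: "u \<in> verts A" and v: "v \<in> verts A" and uv: "reachable A u v"
    define P where "P = min_s A (root A) u"
    define q where "q = min_s A u v"
    have P: "path_from_to A (root A) u P"
      using least_path_root_min_s[OF A' u] unfolding P_def least_path_def by blast
    have q: "path_from_to A u v q"
      using least_path_min_s[OF wfA uv] unfolding q_def least_path_def by blast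
    have "path_from_to (S_obj G) (root G) (h v) (map h P @ tl (map h q))"
      using path_from_to_map[OF h path_from_to_join[OF P q]] graph_hom_root[OF wfA h]
      by (simp add: map_tl)
    then have "map h P @ tl (map h q) = min_s G (root G) (h v)"
      using S_obj_path_eq_min_s[OF G, of "map h P @ tl (map h q)"] by (simp add: path_from_to_def)
    moreover have "h v \<in> verts G" using hG v unfolding graph_hom_def by blast
    ultimately have "least_path G (root G) (h v) (map h P @ tl (map h q))"
      using least_path_root_min_s[OF G] by metis
    moreover have "path_from_to G (root G) (h u) (map h P)"
      using path_from_to_map[OF hG P] graph_hom_root[OF wfA hG] by simp
    ultimately have "least_path G (h u) (h v) (map h q)"
      using path_from_to_map[OF hG q] by (rule least_path_suffix)
    then show "map h (min_s A u v) = min_s G (h u) (h v)"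
      unfolding q_def using min_s_eqI[OF wfG] by metis
  qed
qed

theorem theorem6p2:
  shows
    "(\<forall>G :: 'b eograph. fingraph_obj G \<longrightarrow> finarb_obj (S_obj G))
   \<and> (\<forall>(G :: 'b eograph) (H :: 'c eograph) h.
        fingraph_obj G \<longrightarrow> fingraph_obj H \<longrightarrow> shortlex_hom G H h \<longrightarrow>
        graph_hom (S_obj G) (S_obj H) h)
   \<and> (\<forall>(A :: 'a eograph) (G :: 'b eograph). finarb_obj A \<longrightarrow> fingraph_obj G \<longrightarrow>
        (\<forall>h. shortlex_hom A G h \<longleftrightarrow> graph_hom A (S_obj G) h))"
  using finarb_obj_S_obj graph_hom_S_obj_S_obj
    graph_hom_S_obj_if_shortlex_hom shortlex_hom_if_graph_hom_S_obj
  by blast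

end
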